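(* Let $\varepsilon>0$, $0\le\tau\le\varepsilon$, $\lambda:=\tau/\varepsilon$, and define on $\mathcal V_{[0,1]}$ \[ H(u):= \lambda\langle u,\mathbf{1}-u\rangle_{\mathcal V} +\left\langle u,\left(I-e^{-\tau\Delta}\right)u\right\rangle_{\mathcal V}. \] Then $H(u)\ge0$ for all $u\in\mathcal V_{[0,1]}$. Moreover, if $u_0\in\mathcal V_{[0,1]}$ and $(u_n)_{n\ge0}$, together with some $\beta_{n+1}\in\mathcal B(u_{n+1})$, satisfies for each $n$ \[ u_{n+1} -e^{-\tau\Delta}u_n-\lambda u_{n+1}+\lambda\overline{u_{n+1}}\mathbf{1} =\lambda\beta_{n+1} -\lambda\overline{\beta_{n+1}}\mathbf{1}, \] then $H(u_{n+1})\le H(u_n)$ with equality if and only if $u_{n+1}=u_n$, and \[ H(u_n)-H(u_{n+1}) \geq (1-\lambda)\|u_{n+1}-u_n\|^2_{\mathcal V}. \]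
   Context: $G=(V,E)$ is a finite, simple, connected, undirected graph with weights $\omega_{ij}=\omega_{ji}>0$ for $ij\in E$, $\omega_{ij}=0$ otherwise; $d_i=\sum_j\omega_{ij}$, $r\in[0,1]$ fixed. $\mathcal V$ = functions $V\to\mathbb R$ with $\langle u,v\rangle_{\mathcal V}=\sum_i u_iv_id_i^r$ and norm $\|\cdot\|_{\mathcal V}$; $\mathcal V_{[0,1]}$ = functions $V\to[0,1]$. $(\Delta u)_i=d_i^{-r}\sum_j\omega_{ij}(u_i-u_j)$, $e^{-\tau\Delta}$ its matrix exponential. $\mathbf 1$ all-ones; $\mathcal M(u)=\langle u,\mathbf 1\rangle_{\mathcal V}$; $\bar v=\mathcal M(v)/\mathcal M(\mathbf 1)$. For $u\in\mathcal V_{[0,1]}$, $\mathcal B(u)$ = set of $\beta\in\mathcal V$ with $\beta_i\ge0$ if $u_i=0$, $\beta_i=0$ if $0<u_i<1$, $\beta_i\le0$ if $u_i=1$; $\mathcal B(u)=\emptyset$ otherwise. *)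

theory Defs
  imports "HOL-Analysis.Analysis"
begin

text \<open>Vertex set = the finite type 'v. Weights w :: 'v => 'v => real.
  Real power x^r with the convention 0^0 = 1.\<close>

definition rpow :: "real \<Rightarrow> real \<Rightarrow> real" where
  "rpow x a = (if a = 0 then 1 else x powr a)"

definition weighted_graph :: "('v::finite \<Rightarrow> 'v \<Rightarrow> real) \<Rightarrow> bool" where
  "weighted_graph w \<longleftrightarrow>
     (\<forall>i j. w i j = w j i) \<and> (\<forall>i j. w i j \<ge> 0) \<and> (\<forall>i. w i i = 0) \<and>
     (\<forall>i j. (i, j) \<in> {(a, b). w a b > 0}\<^sup>*)"

definition deg :: "('v::finite \<Rightarrow> 'v \<Rightarrow> real) \<Rightarrow> 'v \<Rightarrow> real" where
  "deg w i = (\<Sum>j\<in>UNIV. w i j)"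

definition ipV :: "('v::finite \<Rightarrow> 'v \<Rightarrow> real) \<Rightarrow> real \<Rightarrow> ('v \<Rightarrow> real) \<Rightarrow> ('v \<Rightarrow> real) \<Rightarrow> real" where
  "ipV w r u v = (\<Sum>i\<in>UNIV. u i * v i * rpow (deg w i) r)"

definition normV :: "('v::finite \<Rightarrow> 'v \<Rightarrow> real) \<Rightarrow> real \<Rightarrow> ('v \<Rightarrow> real) \<Rightarrow> real" where
  "normV w r u = sqrt (ipV w r u u)"

definition V01 :: "('v \<Rightarrow> real) set" where
  "V01 = {u. \<forall>i. 0 \<le> u i \<and> u i \<le> 1}"

definition lap :: "('v::finite \<Rightarrow> 'v \<Rightarrow> real) \<Rightarrow> real \<Rightarrow> ('v \<Rightarrow> real) \<Rightarrow> 'v \<Rightarrow> real" where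
  "lap w r u i = rpow (deg w i) (- r) * (\<Sum>j\<in>UNIV. w i j * (u i - u j))"

definition heat :: "('v::finite \<Rightarrow> 'v \<Rightarrow> real) \<Rightarrow> real \<Rightarrow> real \<Rightarrow> ('v \<Rightarrow> real) \<Rightarrow> 'v \<Rightarrow> real" where
  "heat w r t u i = (\<Sum>k. ((- t) ^ k / fact k) * ((lap w r ^^ k) u) i)"

definition mass :: "('v::finite \<Rightarrow> 'v \<Rightarrow> real) \<Rightarrow> real \<Rightarrow> ('v \<Rightarrow> real) \<Rightarrow> real" where
  "mass w r u = ipV w r u (\<lambda>_. 1)"

definition avg :: "('v::finite \<Rightarrow> 'v \<Rightarrow> real) \<Rightarrow> real \<Rightarrow> ('v \<Rightarrow> real) \<Rightarrow> real" where
  "avg w r v = mass w r v / mass w r (\<lambda>_. 1)"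

definition Bset :: "('v \<Rightarrow> real) \<Rightarrow> ('v \<Rightarrow> real) set" where
  "Bset u = (if u \<in> V01 then
     {b. \<forall>i. (u i = 0 \<longrightarrow> b i \<ge> 0) \<and> (0 < u i \<and> u i < 1 \<longrightarrow> b i = 0) \<and> (u i = 1 \<longrightarrow> b i \<le> 0)}
   else {})"

definition Hfun :: "('v::finite \<Rightarrow> 'v \<Rightarrow> real) \<Rightarrow> real \<Rightarrow> real \<Rightarrow> real \<Rightarrow> ('v \<Rightarrow> real) \<Rightarrow> real" where
  "Hfun w r eps t u = (t / eps) * ipV w r u (\<lambda>i. 1 - u i)
     + ipV w r u (\<lambda>i. u i - heat w r t u i)"

end

(* Since the Laplacian is self-adjoint and positive semidefinite for the inner product of V,
   the heat operator satisfies <u, e^{-s Delta} u> = |e^{-s Delta/2} u|^2, which is positive for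
   u /= 0, and s |-> <e^{-s Delta} u, u> is nonincreasing. The second fact gives H >= 0.
   For a step of the scheme put d = u_{n+1} - u_n. The scheme conserves mass, <d, 1> = 0, and
   together with self-adjointness this turns H(u_n) - H(u_{n+1}) into
   (1 - lambda) |d|^2 + <d, e^{-tau Delta} d> - 2 lambda <d, beta_{n+1}>,
   where the last inner product is <= 0 by the sign conditions defining B(u_{n+1}). *)

theory Submission
  imports Defs
begin

section \<open>The exponential of a matrix acting on functions\<close>

definition matvec :: "('v::finite \<Rightarrow> 'v \<Rightarrow> real) \<Rightarrow> ('v \<Rightarrow> real) \<Rightarrow> 'v \<Rightarrow> real" where
  "matvec M u i = (\<Sum>j\<in>UNIV. M i j * u j)"

definition unit_fun :: "'v \<Rightarrow> 'v \<Rightarrow> real" where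
  "unit_fun j l = (if l = j then 1 else 0)"

definition exp_coeff :: "real \<Rightarrow> nat \<Rightarrow> real" where
  "exp_coeff t k = (- t) ^ k / fact k"

definition heat_semigroup :: "('v::finite \<Rightarrow> 'v \<Rightarrow> real) \<Rightarrow> real \<Rightarrow> ('v \<Rightarrow> real) \<Rightarrow> 'v \<Rightarrow> real"
  where "heat_semigroup M t u i = (\<Sum>k. exp_coeff t k * (matvec M ^^ k) u i)"

definition l1_norm :: "('v::finite \<Rightarrow> real) \<Rightarrow> real" where
  "l1_norm u = (\<Sum>i\<in>UNIV. \<bar>u i\<bar>)"

definition mat_l1_norm :: "('v::finite \<Rightarrow> 'v \<Rightarrow> real) \<Rightarrow> real" where
  "mat_l1_norm M = (\<Sum>i\<in>UNIV. \<Sum>j\<in>UNIV. \<bar>M i j\<bar>)"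

lemma abs_le_l1_norm: "\<bar>u i\<bar> \<le> l1_norm u"
  unfolding l1_norm_def by (rule member_le_sum) auto

lemma l1_norm_matvec_le: "l1_norm (matvec M u) \<le> mat_l1_norm M * l1_norm u"
proof -
  have "l1_norm (matvec M u) \<le> (\<Sum>i\<in>UNIV. \<Sum>j\<in>UNIV. \<bar>M i j\<bar> * \<bar>u j\<bar>)"
    unfolding l1_norm_def matvec_def
    by (intro sum_mono order.trans[OF sum_abs]) (simp add: abs_mult)
  also have "\<dots> \<le> (\<Sum>i\<in>UNIV. \<Sum>j\<in>UNIV. \<bar>M i j\<bar> * l1_norm u)"
    by (intro sum_mono mult_left_mono abs_le_l1_norm) auto
  finally show ?thesis
    by (simp add: mat_l1_norm_def sum_distrib_right)
qed

lemma abs_matvec_pow_le: "\<bar>(matvec M ^^ k) u i\<bar> \<le> mat_l1_norm M ^ k * l1_norm u"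
proof -
  have "l1_norm ((matvec M ^^ k) u) \<le> mat_l1_norm M ^ k * l1_norm u"
  proof (induction k)
    case (Suc k)
    have "mat_l1_norm M \<ge> 0"
      unfolding mat_l1_norm_def by (intro sum_nonneg) auto
    with Suc show ?case
      using l1_norm_matvec_le[of M "(matvec M ^^ k) u"]
      by (simp add: mult.assoc order.trans[OF _ mult_left_mono])
  qed simp
  then show ?thesis
    using abs_le_l1_norm order.trans by blast
qed

lemma summable_abs_heat_series: "summable (\<lambda>k. \<bar>exp_coeff t k * (matvec M ^^ k) u i\<bar>)"
proof (rule summable_comparison_test')
  show "summable (\<lambda>k. l1_norm u * (inverse (fact k) * (\<bar>t\<bar> * mat_l1_norm M) ^ k))"
    by (intro summable_mult summable_exp)
  show "norm \<bar>exp_coeff t k * (matvec M ^^ k) u i\<bar>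
      \<le> l1_norm u * (inverse (fact k) * (\<bar>t\<bar> * mat_l1_norm M) ^ k)" for k
  proof -
    have "\<bar>t\<bar> ^ k / fact k * \<bar>(matvec M ^^ k) u i\<bar> \<le> \<bar>t\<bar> ^ k / fact k * (mat_l1_norm M ^ k * l1_norm u)"
      by (intro mult_left_mono abs_matvec_pow_le) auto
    then show ?thesis
      by (simp add: exp_coeff_def abs_mult power_abs power_mult_distrib divide_inverse mult_ac)
  qed
qed

lemma heat_semigroup_sums: "(\<lambda>k. exp_coeff t k * (matvec M ^^ k) u i) sums heat_semigroup M t u i"
  unfolding heat_semigroup_def
  by (rule summable_sums[OF summable_rabs_cancel[OF summable_abs_heat_series]])

lemma matvec_pow_expansion: "(matvec M ^^ k) u i = (\<Sum>j\<in>UNIV. u j * (matvec M ^^ k) (unit_fun j) i)"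
proof (induction k arbitrary: i)
  case 0
  show ?case
    by (simp add: unit_fun_def if_distrib[where f="\<lambda>x. _ * x"] cong: if_cong)
next
  case (Suc k)
  have "(matvec M ^^ Suc k) u i = (\<Sum>l\<in>UNIV. M i l * (matvec M ^^ k) u l)"
    by (simp add: matvec_def[of M "(matvec M ^^ k) u"])
  also have "\<dots> = (\<Sum>l\<in>UNIV. \<Sum>j\<in>UNIV. M i l * (u j * (matvec M ^^ k) (unit_fun j) l))"
    by (simp add: Suc sum_distrib_left)
  also have "\<dots> = (\<Sum>j\<in>UNIV. u j * (\<Sum>l\<in>UNIV. M i l * (matvec M ^^ k) (unit_fun j) l))"
    by (subst sum.swap) (simp add: sum_distrib_left mult_ac)
  also have "\<dots> = (\<Sum>j\<in>UNIV. u j * (matvec M ^^ Suc k) (unit_fun j) i)"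
    by (simp add: matvec_def[of M "(matvec M ^^ k) (unit_fun _)"])
  finally show ?case .
qed

lemma heat_semigroup_expansion:
  "heat_semigroup M t u i = (\<Sum>j\<in>UNIV. u j * heat_semigroup M t (unit_fun j) i)"
proof -
  have "(\<lambda>k. \<Sum>j\<in>UNIV. u j * (exp_coeff t k * (matvec M ^^ k) (unit_fun j) i))
      sums (\<Sum>j\<in>UNIV. u j * heat_semigroup M t (unit_fun j) i)"
    by (intro sums_sum sums_mult heat_semigroup_sums)
  moreover have "(\<lambda>k. \<Sum>j\<in>UNIV. u j * (exp_coeff t k * (matvec M ^^ k) (unit_fun j) i))
      = (\<lambda>k. exp_coeff t k * (matvec M ^^ k) u i)"
    by (subst matvec_pow_expansion) (simp add: sum_distrib_left mult_ac)
  ultimately show ?thesis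
    using sums_unique2[OF heat_semigroup_sums] by simp
qed

lemma heat_semigroup_add:
  "heat_semigroup M t (\<lambda>i. x i + y i) = (\<lambda>i. heat_semigroup M t x i + heat_semigroup M t y i)"
  by (rule ext, subst (1 2 3) heat_semigroup_expansion) (simp add: distrib_right sum.distrib)

lemma exp_coeff_convolution: "(\<Sum>k\<le>n. exp_coeff s k * exp_coeff r (n - k)) = exp_coeff (s + r) n"
proof -
  have "exp_coeff (s + r) n = ((- s) + (- r)) ^ n / fact n"
    by (simp add: exp_coeff_def)
  also have "\<dots> = (\<Sum>k\<le>n. of_nat (n choose k) / fact n * (- s) ^ k * (- r) ^ (n - k))"
    by (subst binomial_ring) (simp add: sum_divide_distrib)
  also have "\<dots> = (\<Sum>k\<le>n. exp_coeff s k * exp_coeff r (n - k))"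
    by (intro sum.cong refl) (simp add: exp_coeff_def binomial_fact)
  finally show ?thesis ..
qed

text \<open>The semigroup law is proved for the kernel first, where the Cauchy product of scalar
  exponential series applies.\<close>

lemma heat_kernel_convolution:
  "(\<Sum>l\<in>UNIV. heat_semigroup M s (unit_fun l) i * heat_semigroup M r (unit_fun j) l)
    = heat_semigroup M (s + r) (unit_fun j) i"
proof -
  define a where "a l = (\<lambda>k. exp_coeff s k * (matvec M ^^ k) (unit_fun l) i)" for l
  define b where "b l = (\<lambda>k. exp_coeff r k * (matvec M ^^ k) (unit_fun j) l)" for l
  have "(\<lambda>n. \<Sum>l\<in>UNIV. \<Sum>k\<le>n. a l k * b l (n - k))
      sums (\<Sum>l\<in>UNIV. heat_semigroup M s (unit_fun l) i * heat_semigroup M r (unit_fun j) l)"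
  proof (intro sums_sum)
    fix l
    have "(\<lambda>n. \<Sum>k\<le>n. a l k * b l (n - k)) sums (suminf (a l) * suminf (b l))"
      by (rule Cauchy_product_sums) (simp_all add: a_def b_def summable_abs_heat_series)
    then show "(\<lambda>n. \<Sum>k\<le>n. a l k * b l (n - k))
        sums (heat_semigroup M s (unit_fun l) i * heat_semigroup M r (unit_fun j) l)"
      by (simp add: a_def b_def heat_semigroup_def)
  qed
  moreover have "(\<Sum>l\<in>UNIV. \<Sum>k\<le>n. a l k * b l (n - k))
      = exp_coeff (s + r) n * (matvec M ^^ n) (unit_fun j) i" for n
  proof -
    have "(\<Sum>l\<in>UNIV. \<Sum>k\<le>n. a l k * b l (n - k))
        = (\<Sum>k\<le>n. exp_coeff s k * exp_coeff r (n - k)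
            * (\<Sum>l\<in>UNIV. (matvec M ^^ (n - k)) (unit_fun j) l * (matvec M ^^ k) (unit_fun l) i))"
      unfolding a_def b_def by (subst sum.swap) (simp add: sum_distrib_left mult_ac)
    also have "\<dots> = (\<Sum>k\<le>n. exp_coeff s k * exp_coeff r (n - k) * (matvec M ^^ n) (unit_fun j) i)"
    proof (intro sum.cong refl)
      fix k assume "k \<in> {..n}"
      then have "matvec M ^^ n = (matvec M ^^ k) \<circ> (matvec M ^^ (n - k))"
        by (metis atMost_iff funpow_add le_add_diff_inverse)
      then show "exp_coeff s k * exp_coeff r (n - k)
            * (\<Sum>l\<in>UNIV. (matvec M ^^ (n - k)) (unit_fun j) l * (matvec M ^^ k) (unit_fun l) i)
          = exp_coeff s k * exp_coeff r (n - k) * (matvec M ^^ n) (unit_fun j) i"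
        by (simp add: matvec_pow_expansion[of k M "(matvec M ^^ (n - k)) (unit_fun j)"])
    qed
    also have "\<dots> = exp_coeff (s + r) n * (matvec M ^^ n) (unit_fun j) i"
      by (simp only: sum_distrib_right[symmetric] exp_coeff_convolution)
    finally show ?thesis .
  qed
  ultimately have "(\<lambda>n. exp_coeff (s + r) n * (matvec M ^^ n) (unit_fun j) i)
      sums (\<Sum>l\<in>UNIV. heat_semigroup M s (unit_fun l) i * heat_semigroup M r (unit_fun j) l)"
    by simp
  then show ?thesis
    using heat_semigroup_sums sums_unique2 by blast
qed

lemma heat_semigroup_add_time:
  "heat_semigroup M s (heat_semigroup M r u) = heat_semigroup M (s + r) u"
proof
  fix i
  have "heat_semigroup M s (heat_semigroup M r u) i
      = (\<Sum>l\<in>UNIV. (\<Sum>j\<in>UNIV. u j * heat_semigroup M r (unit_fun j) l) * heat_semigroup M s (unit_fun l) i)"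
    by (simp only: heat_semigroup_expansion[of M s "heat_semigroup M r u"] heat_semigroup_expansion[of M r u] mult.commute)
  also have "\<dots> = (\<Sum>j\<in>UNIV. u j * (\<Sum>l\<in>UNIV. heat_semigroup M s (unit_fun l) i * heat_semigroup M r (unit_fun j) l))"
    unfolding sum_distrib_left sum_distrib_right by (subst sum.swap) (simp add: mult_ac)
  also have "\<dots> = heat_semigroup M (s + r) u i"
    by (simp add: heat_kernel_convolution heat_semigroup_expansion[of M "s + r" u])
  finally show "heat_semigroup M s (heat_semigroup M r u) i = heat_semigroup M (s + r) u i" .
qed

lemma heat_semigroup_fixed:
  assumes "matvec M u = (\<lambda>_. 0)"
  shows "heat_semigroup M t u = u"
proof
  fix i
  have "exp_coeff t k * (matvec M ^^ k) u i = (if k = 0 then u i else 0)" for k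
  proof (cases k)
    case (Suc m)
    have "(matvec M ^^ m) (\<lambda>_. 0) = (\<lambda>_. 0)"
      by (induction m) (simp_all add: matvec_def)
    with Suc assms show ?thesis
      by (simp add: funpow_Suc_right del: funpow.simps)
  qed (simp add: exp_coeff_def)
  then have "(\<lambda>k. if k = 0 then u i else 0) sums heat_semigroup M t u i"
    using heat_semigroup_sums[of t M u i] by simp
  then show "heat_semigroup M t u i = u i"
    using sums_unique2[OF _ sums_single[of 0 "\<lambda>_. u i"]] by simp
qed

lemma heat_semigroup_zero_time: "heat_semigroup M 0 u = u"
proof
  fix i
  have "exp_coeff 0 k * (matvec M ^^ k) u i = (if k = 0 then u i else 0)" for k
    by (cases k) (simp_all add: exp_coeff_def)
  then have "(\<lambda>k. if k = 0 then u i else 0) sums heat_semigroup M 0 u i"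
    using heat_semigroup_sums[of 0 M u i] by simp
  then show "heat_semigroup M 0 u i = u i"
    using sums_unique2[OF _ sums_single[of 0 "\<lambda>_. u i"]] by simp
qed

lemma heat_semigroup_eq_zero_iff: "heat_semigroup M t u = (\<lambda>_. 0) \<longleftrightarrow> u = (\<lambda>_. 0)"
proof -
  have zero: "heat_semigroup M s (\<lambda>_. 0) = (\<lambda>_. 0)" for s
    by (intro heat_semigroup_fixed ext) (simp add: matvec_def)
  have "u = heat_semigroup M (- t) (heat_semigroup M t u)"
    by (simp add: heat_semigroup_add_time heat_semigroup_zero_time)
  then show ?thesis
    using zero by metis
qed

lemma heat_semigroup_matvec: "heat_semigroup M t (matvec M u) = matvec M (heat_semigroup M t u)"
proof
  fix i
  have "(\<lambda>k. \<Sum>j\<in>UNIV. M i j * (exp_coeff t k * (matvec M ^^ k) u j))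
      sums matvec M (heat_semigroup M t u) i"
    unfolding matvec_def[of M "heat_semigroup M t u"] by (intro sums_sum sums_mult heat_semigroup_sums)
  moreover have "(\<Sum>j\<in>UNIV. M i j * (exp_coeff t k * (matvec M ^^ k) u j))
      = exp_coeff t k * (matvec M ^^ k) (matvec M u) i" for k
  proof -
    have "(\<Sum>j\<in>UNIV. M i j * (exp_coeff t k * (matvec M ^^ k) u j))
        = exp_coeff t k * matvec M ((matvec M ^^ k) u) i"
      by (simp add: matvec_def[of M "(matvec M ^^ k) u"] sum_distrib_left mult_ac)
    then show ?thesis
      by (simp only: funpow_swap1)
  qed
  ultimately show "heat_semigroup M t (matvec M u) i = matvec M (heat_semigroup M t u) i"
    using sums_unique2[OF heat_semigroup_sums] by simp
qed

lemma heat_semigroup_has_derivative: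
  "((\<lambda>s. heat_semigroup M s u i) has_real_derivative - heat_semigroup M s (matvec M u) i) (at s)"
proof -
  define c where "c k = (- 1) ^ k / fact k * (matvec M ^^ k) u i" for k
  have series: "heat_semigroup M s u i = (\<Sum>k. c k * s ^ k)" for s
    by (simp add: heat_semigroup_def c_def exp_coeff_def power_minus[of s] mult_ac)
  have "(\<lambda>k. c k * s ^ k) = (\<lambda>k. exp_coeff s k * (matvec M ^^ k) u i)" for s
    by (simp add: c_def exp_coeff_def power_minus[of s] mult_ac)
  then have "summable (\<lambda>k. c k * s ^ k)" for s
    using sums_summable[OF heat_semigroup_sums] by metis
  then have "((\<lambda>s. \<Sum>k. c k * s ^ k) has_real_derivative (\<Sum>k. diffs c k * s ^ k)) (at s)"
    by (rule termdiffs_strong_converges_everywhere)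
  moreover have "(\<lambda>k. diffs c k * s ^ k) sums (- heat_semigroup M s (matvec M u) i)"
  proof -
    have "diffs c k * s ^ k = - (exp_coeff s k * (matvec M ^^ k) (matvec M u) i)" for k
      by (simp add: diffs_def c_def exp_coeff_def power_minus[of s] divide_simps funpow_Suc_right
          del: funpow.simps)
    then show ?thesis
      using sums_minus[OF heat_semigroup_sums] by simp
  qed
  ultimately show ?thesis
    by (simp add: series sums_unique[symmetric])
qed

section \<open>Weighted inner products and self-adjoint generators\<close>

definition ipw :: "('v::finite \<Rightarrow> real) \<Rightarrow> ('v \<Rightarrow> real) \<Rightarrow> ('v \<Rightarrow> real) \<Rightarrow> real" where
  "ipw p u v = (\<Sum>i\<in>UNIV. u i * v i * p i)"

lemma ipw_commute: "ipw p u v = ipw p v u"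
  unfolding ipw_def by (simp add: mult_ac)

lemma ipw_diff_right: "ipw p u (\<lambda>i. v i - w i) = ipw p u v - ipw p u w"
  unfolding ipw_def by (simp add: sum_subtractf[symmetric] algebra_simps)

lemma ipw_const_right: "ipw p u (\<lambda>_. 1) = (\<Sum>i\<in>UNIV. u i * p i)"
  unfolding ipw_def by simp

lemma Bset_imp_V01: "b \<in> Bset v \<Longrightarrow> v \<in> V01"
  by (auto simp: Bset_def split: if_splits)

lemma ipw_diff_Bset_nonpos:
  assumes "\<And>i. p i \<ge> 0" and "u \<in> V01" and "b \<in> Bset v"
  shows "ipw p (\<lambda>i. v i - u i) b \<le> 0"
  unfolding ipw_def
proof (intro sum_nonpos)
  fix i
  have v: "0 \<le> v i" "v i \<le> 1"
    and b: "(v i = 0 \<longrightarrow> b i \<ge> 0) \<and> (0 < v i \<and> v i < 1 \<longrightarrow> b i = 0) \<and> (v i = 1 \<longrightarrow> b i \<le> 0)"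
    using Bset_imp_V01[OF assms(3)] assms(3) by (auto simp: Bset_def V01_def)
  have u: "0 \<le> u i" "u i \<le> 1"
    using assms(2) by (auto simp: V01_def)
  have "(v i - u i) * b i \<le> 0"
  proof (cases "v i = 0 \<or> v i = 1")
    case True
    then show ?thesis
      using b u by (auto simp: mult_nonpos_nonneg mult_nonneg_nonpos)
  next
    case False
    then show ?thesis
      using b v by auto
  qed
  then show "(v i - u i) * b i * p i \<le> 0"
    using assms(1) by (rule mult_nonpos_nonneg)
qed

lemma ipw_self_nonneg: "(\<And>i. p i \<ge> 0) \<Longrightarrow> ipw p u u \<ge> 0"
  unfolding ipw_def by (intro sum_nonneg) simp

lemma ipw_self_pos:
  assumes "\<And>i. p i > 0" and "u \<noteq> (\<lambda>_. 0)"
  shows "ipw p u u > 0"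
proof -
  obtain i where "u i \<noteq> 0"
    using assms(2) by auto
  then have "u i * u i * p i > 0"
    using assms(1)[of i] by (metis mult_pos_pos not_real_square_gt_zero)
  moreover have "u j * u j * p j \<ge> 0" for j
    using assms(1)[of j] by simp
  ultimately show ?thesis
    unfolding ipw_def by (intro sum_pos2[where i=i]) auto
qed

lemma ipw_heat_sums:
  "(\<lambda>k. exp_coeff t k * ipw p ((matvec M ^^ k) u) v) sums ipw p (heat_semigroup M t u) v"
proof -
  have "(\<lambda>k. \<Sum>i\<in>UNIV. exp_coeff t k * (matvec M ^^ k) u i * (v i * p i))
      sums (\<Sum>i\<in>UNIV. heat_semigroup M t u i * (v i * p i))"
    by (intro sums_sum sums_mult2 heat_semigroup_sums)
  then show ?thesis
    unfolding ipw_def by (simp add: sum_distrib_left mult_ac)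
qed

lemma ipw_heat_has_derivative:
  "((\<lambda>s. ipw p (heat_semigroup M s u) v) has_real_derivative
      - ipw p (heat_semigroup M s (matvec M u)) v) (at s)"
  unfolding ipw_def
  by (auto intro!: derivative_eq_intros heat_semigroup_has_derivative simp: sum_negf[symmetric])

locale selfadjoint_matrix =
  fixes M :: "'v::finite \<Rightarrow> 'v \<Rightarrow> real" and p :: "'v \<Rightarrow> real"
  assumes weight_pos: "\<And>i. p i > 0"
    and selfadjoint: "\<And>u v. ipw p (matvec M u) v = ipw p u (matvec M v)"
begin

lemma ipw_matvec_pow: "ipw p ((matvec M ^^ k) u) v = ipw p u ((matvec M ^^ k) v)"
proof (induction k arbitrary: v)
  case (Suc k)
  have "ipw p ((matvec M ^^ Suc k) u) v = ipw p ((matvec M ^^ k) u) (matvec M v)"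
    by (simp add: selfadjoint)
  also have "\<dots> = ipw p u ((matvec M ^^ k) (matvec M v))"
    by (rule Suc)
  also have "\<dots> = ipw p u ((matvec M ^^ Suc k) v)"
    by (simp only: funpow_Suc_right comp_apply)
  finally show ?case .
qed simp

lemma ipw_heat_selfadjoint: "ipw p (heat_semigroup M t u) v = ipw p u (heat_semigroup M t v)"
proof -
  have "(\<lambda>k. exp_coeff t k * ipw p ((matvec M ^^ k) u) v) sums ipw p (heat_semigroup M t v) u"
    using ipw_heat_sums[where t=t and p=p and M=M and u=v and v=u] by (simp add: ipw_matvec_pow ipw_commute[of p v])
  then show ?thesis
    using sums_unique2[OF ipw_heat_sums] ipw_commute by metis
qed

lemma ipw_heat_self_eq_square:
  "ipw p u (heat_semigroup M t u) = ipw p (heat_semigroup M (t / 2) u) (heat_semigroup M (t / 2) u)"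
  using heat_semigroup_add_time[of M "t / 2" "t / 2" u]
  by (simp add: ipw_heat_selfadjoint)

lemma ipw_heat_self_nonneg: "ipw p u (heat_semigroup M t u) \<ge> 0"
  by (simp add: ipw_heat_self_eq_square ipw_self_nonneg less_imp_le weight_pos)

lemma ipw_heat_self_pos: "u \<noteq> (\<lambda>_. 0) \<Longrightarrow> ipw p u (heat_semigroup M t u) > 0"
  by (simp add: ipw_heat_self_eq_square ipw_self_pos weight_pos heat_semigroup_eq_zero_iff)

lemma ipw_heat_const:
  assumes "matvec M (\<lambda>_. 1) = (\<lambda>_. 0)"
  shows "ipw p (heat_semigroup M t u) (\<lambda>_. 1) = ipw p u (\<lambda>_. 1)"
  by (simp add: ipw_heat_selfadjoint heat_semigroup_fixed[OF assms])

lemma ipw_heat_self_le: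
  assumes psd: "\<And>u. ipw p (matvec M u) u \<ge> 0" and "t \<ge> 0"
  shows "ipw p u (heat_semigroup M t u) \<le> ipw p u u"
proof -
  \<comment> \<open>the derivative of s \<mapsto> ipw p (heat_semigroup M s u) u is minus this quantity\<close>
  have "ipw p (heat_semigroup M s (matvec M u)) u \<ge> 0" for s
  proof -
    define y where "y = heat_semigroup M (s / 2) u"
    have "heat_semigroup M s (matvec M u) = heat_semigroup M (s / 2) (matvec M y)"
      using heat_semigroup_add_time[of M "s / 2" "s / 2" "matvec M u"]
      by (simp add: y_def heat_semigroup_matvec)
    then have "ipw p (heat_semigroup M s (matvec M u)) u = ipw p (matvec M y) y"
      by (simp add: ipw_heat_selfadjoint y_def)
    then show ?thesis
      using psd by simp
  qed
  then have "ipw p (heat_semigroup M t u) u \<le> ipw p (heat_semigroup M 0 u) u"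
    by (intro DERIV_nonpos_imp_nonincreasing[OF \<open>t \<ge> 0\<close>])
      (use ipw_heat_has_derivative neg_le_0_iff_le in blast)
  then show ?thesis
    by (simp add: heat_semigroup_zero_time ipw_commute)
qed

section \<open>The energy of the scheme\<close>

definition energy :: "real \<Rightarrow> real \<Rightarrow> ('v \<Rightarrow> real) \<Rightarrow> real" where
  "energy lam t u = lam * ipw p u (\<lambda>i. 1 - u i) + ipw p u (\<lambda>i. u i - heat_semigroup M t u i)"

definition mean :: "('v \<Rightarrow> real) \<Rightarrow> real" where
  "mean u = ipw p u (\<lambda>_. 1) / ipw p (\<lambda>_. 1) (\<lambda>_. 1)"

lemma energy_nonneg:
  assumes psd: "\<And>u. ipw p (matvec M u) u \<ge> 0" and "0 \<le> lam" "0 \<le> t" "u \<in> V01"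
  shows "energy lam t u \<ge> 0"
proof -
  have "ipw p u (\<lambda>i. 1 - u i) \<ge> 0"
    using \<open>u \<in> V01\<close> weight_pos unfolding ipw_def V01_def
    by (intro sum_nonneg mult_nonneg_nonneg) (auto intro: less_imp_le)
  then show ?thesis
    using ipw_heat_self_le[OF psd \<open>0 \<le> t\<close>, of u] \<open>0 \<le> lam\<close>
    by (simp add: energy_def ipw_diff_right)
qed

lemma mass_conserved:
  assumes const: "matvec M (\<lambda>_. 1) = (\<lambda>_. 0)"
    and scheme: "\<And>i. v i - heat_semigroup M t u i - lam * v i + lam * mean v = lam * b i - lam * mean b"
  shows "ipw p (\<lambda>i. v i - u i) (\<lambda>_. 1) = 0"
proof -
  have mean_mult: "mean x * (\<Sum>i\<in>UNIV. p i) = (\<Sum>i\<in>UNIV. x i * p i)" for x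
    using sum_pos[of UNIV p] weight_pos by (simp add: mean_def ipw_def)
  let ?m = "\<lambda>x. \<Sum>i\<in>UNIV. x i * p i"
  have "?m v - ?m (heat_semigroup M t u) - lam * ?m v + lam * (mean v * (\<Sum>i\<in>UNIV. p i))
      = (\<Sum>i\<in>UNIV. (v i - heat_semigroup M t u i - lam * v i + lam * mean v) * p i)"
    by (simp add: algebra_simps sum.distrib sum_subtractf sum_distrib_left sum_distrib_right)
  also have "\<dots> = (\<Sum>i\<in>UNIV. (lam * b i - lam * mean b) * p i)"
    by (simp add: scheme)
  also have "\<dots> = lam * ?m b - lam * (mean b * (\<Sum>i\<in>UNIV. p i))"
    by (simp add: algebra_simps sum.distrib sum_subtractf sum_distrib_left sum_distrib_right)
  finally have "?m v = ?m (heat_semigroup M t u)"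
    by (simp add: mean_mult)
  then show ?thesis
    using ipw_heat_const[OF const, of t u]
    by (simp add: ipw_const_right left_diff_distrib sum_subtractf)
qed

lemma energy_decrease_eq:
  fixes u v :: "'v \<Rightarrow> real"
  defines "d \<equiv> \<lambda>i. v i - u i"
  assumes heat_u: "\<And>i. heat_semigroup M t u i = (1 - lam) * v i - lam * b i + c"
    and mass: "ipw p d (\<lambda>_. 1) = 0"
  shows "energy lam t u - energy lam t v
    = (1 - lam) * ipw p d d + ipw p d (heat_semigroup M t d) - 2 * lam * ipw p d b"
proof -
  define a where "a = heat_semigroup M t u"
  define D where "D = heat_semigroup M t d"
  have heat_v: "heat_semigroup M t v = (\<lambda>i. a i + D i)"
    using heat_semigroup_add[of M t u d] by (simp add: a_def D_def d_def)
  have "ipw p u D = ipw p d a"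
    using ipw_heat_selfadjoint[of t u d] by (simp add: a_def D_def ipw_commute)
  then have cross: "(\<Sum>i\<in>UNIV. u i * D i * p i) = (\<Sum>i\<in>UNIV. d i * a i * p i)"
    by (simp add: ipw_def)
  define L where "L i = p i * (lam * (u i * (1 - u i)) + (u i * u i - u i * a i)
    - (lam * (v i * (1 - v i)) + (v i * v i - v i * (a i + D i))))" for i
  define R where "R i = p i * ((1 - lam) * (d i * d i) + d i * D i - 2 * lam * (d i * b i))" for i
  \<comment> \<open>after inserting heat_u, the remainder is a multiple of d plus the cross terms,
    which vanish by mass conservation and self-adjointness\<close>
  have pointwise: "L i = R i + (2 * c - lam) * (d i * p i) + (u i * D i * p i - d i * a i * p i)" for i
    unfolding L_def R_def d_def a_def heat_u by (simp add: algebra_simps)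
  have "energy lam t u - energy lam t v = (\<Sum>i\<in>UNIV. L i)"
    unfolding energy_def heat_v L_def ipw_def a_def
    by (simp add: sum_subtractf sum.distrib sum_distrib_left algebra_simps)
  also have "\<dots> = (\<Sum>i\<in>UNIV. R i)"
    using mass cross
    by (simp add: pointwise sum.distrib sum_subtractf sum_distrib_left[symmetric] ipw_const_right)
  also have "\<dots> = (1 - lam) * ipw p d d + ipw p d D - 2 * lam * ipw p d b"
    unfolding R_def ipw_def by (simp add: sum_subtractf sum.distrib sum_distrib_left algebra_simps)
  finally show ?thesis
    by (simp add: D_def)
qed

lemma energy_dissipation:
  assumes const: "matvec M (\<lambda>_. 1) = (\<lambda>_. 0)"
    and lam: "0 \<le> lam" "lam \<le> 1" and "u \<in> V01" and "b \<in> Bset v"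
    and scheme: "\<And>i. v i - heat_semigroup M t u i - lam * v i + lam * mean v = lam * b i - lam * mean b"
  shows "energy lam t v \<le> energy lam t u"
    and "energy lam t v = energy lam t u \<longleftrightarrow> v = u"
    and "energy lam t u - energy lam t v \<ge> (1 - lam) * ipw p (\<lambda>i. v i - u i) (\<lambda>i. v i - u i)"
proof -
  define d where "d = (\<lambda>i. v i - u i)"
  have "heat_semigroup M t u i = (1 - lam) * v i - lam * b i + (lam * mean v + lam * mean b)" for i
    using scheme[of i] by (simp add: algebra_simps)
  then have decrease: "energy lam t u - energy lam t v
      = (1 - lam) * ipw p d d + ipw p d (heat_semigroup M t d) - 2 * lam * ipw p d b"
    using energy_decrease_eq mass_conserved[OF const scheme] by (simp add: d_def)
  have "ipw p d b \<le> 0"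
    unfolding d_def using weight_pos \<open>u \<in> V01\<close> \<open>b \<in> Bset v\<close> by (intro ipw_diff_Bset_nonpos less_imp_le)
  then have "lam * ipw p d b \<le> 0"
    using lam by (simp add: mult_nonneg_nonpos)
  moreover have "(1 - lam) * ipw p d d \<ge> 0"
    using lam weight_pos by (simp add: ipw_self_nonneg less_imp_le)
  moreover have "ipw p d (heat_semigroup M t d) \<ge> 0"
    by (rule ipw_heat_self_nonneg)
  moreover have "ipw p d (heat_semigroup M t d) > 0" if "v \<noteq> u"
    using that by (intro ipw_heat_self_pos) (simp add: d_def fun_eq_iff)
  ultimately show "energy lam t v \<le> energy lam t u"
    and "energy lam t v = energy lam t u \<longleftrightarrow> v = u"
    and "energy lam t u - energy lam t v \<ge> (1 - lam) * ipw p (\<lambda>i. v i - u i) (\<lambda>i. v i - u i)"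
    using decrease unfolding d_def by force+
qed

end

section \<open>The graph Laplacian\<close>

definition lap_matrix :: "('v::finite \<Rightarrow> 'v \<Rightarrow> real) \<Rightarrow> real \<Rightarrow> 'v \<Rightarrow> 'v \<Rightarrow> real" where
  "lap_matrix w r i j = rpow (deg w i) (- r) * ((if j = i then deg w i else 0) - w i j)"

lemma lap_eq_matvec: "lap w r = matvec (lap_matrix w r)"
proof (intro ext)
  fix u i
  have "(\<Sum>j\<in>UNIV. (if j = i then deg w i else 0) * u j) = deg w i * u i"
    by (simp add: if_distrib[where f="\<lambda>x. x * _"] cong: if_cong)
  then have "(\<Sum>j\<in>UNIV. ((if j = i then deg w i else 0) - w i j) * u j)
      = (\<Sum>j\<in>UNIV. w i j * (u i - u j))"
    by (simp add: left_diff_distrib right_diff_distrib sum_subtractf deg_def sum_distrib_right)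
  then show "lap w r u i = matvec (lap_matrix w r) u i"
    by (simp add: lap_def matvec_def lap_matrix_def mult.assoc flip: sum_distrib_left)
qed

lemma heat_eq_heat_semigroup: "heat w r t = heat_semigroup (lap_matrix w r) t"
  by (intro ext) (simp add: heat_def heat_semigroup_def exp_coeff_def lap_eq_matvec)

lemma ipV_eq_ipw: "ipV w r = ipw (\<lambda>i. rpow (deg w i) r)"
  by (intro ext) (simp add: ipV_def ipw_def)

lemma rpow_pos: "x > 0 \<Longrightarrow> rpow x a > 0"
  by (simp add: rpow_def)

lemma edge_sum_symmetric:
  fixes w :: "'v::finite \<Rightarrow> 'v \<Rightarrow> real"
  assumes "\<And>i j. w i j = w j i"
  shows "(\<Sum>i\<in>UNIV. \<Sum>j\<in>UNIV. w i j * (u i - u j) * v i)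
    = (\<Sum>i\<in>UNIV. \<Sum>j\<in>UNIV. w i j * (u i - u j) * (v i - v j)) / 2"
proof -
  have "(\<Sum>i\<in>UNIV. \<Sum>j\<in>UNIV. w i j * (u i - u j) * v i)
      = (\<Sum>i\<in>UNIV. \<Sum>j\<in>UNIV. w i j * (u j - u i) * v j)"
    by (subst sum.swap) (simp add: assms)
  moreover have "(\<Sum>i\<in>UNIV. \<Sum>j\<in>UNIV. w i j * (u i - u j) * v i)
      + (\<Sum>i\<in>UNIV. \<Sum>j\<in>UNIV. w i j * (u j - u i) * v j)
      = (\<Sum>i\<in>UNIV. \<Sum>j\<in>UNIV. w i j * (u i - u j) * (v i - v j))"
    by (simp add: sum.distrib[symmetric] algebra_simps)
  ultimately show ?thesis
    by simp
qed

lemma ipw_lap_matrix_dirichlet: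
  assumes "\<And>i j. w i j = w j i" and "\<And>i. deg w i > 0"
  shows "ipw (\<lambda>i. rpow (deg w i) r) (matvec (lap_matrix w r) u) v
    = (\<Sum>i\<in>UNIV. \<Sum>j\<in>UNIV. w i j * (u i - u j) * (v i - v j)) / 2"
proof -
  have "lap w r u i * v i * rpow (deg w i) r = (\<Sum>j\<in>UNIV. w i j * (u i - u j) * v i)" for i
  proof -
    have "rpow (deg w i) (- r) * rpow (deg w i) r = 1"
      using assms(2)[of i] by (simp add: rpow_def powr_minus)
    then have "lap w r u i * v i * rpow (deg w i) r
        = (rpow (deg w i) (- r) * rpow (deg w i) r) * (\<Sum>j\<in>UNIV. w i j * (u i - u j)) * v i"
      by (simp add: lap_def mult_ac)
    also have "\<dots> = (\<Sum>j\<in>UNIV. w i j * (u i - u j) * v i)"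
      using \<open>rpow (deg w i) (- r) * rpow (deg w i) r = 1\<close> by (simp add: sum_distrib_right)
    finally show ?thesis .
  qed
  then show ?thesis
    using edge_sum_symmetric[OF assms(1)] by (simp add: ipw_def lap_eq_matvec[symmetric])
qed

lemma selfadjoint_lap_matrix:
  assumes "\<And>i j. w i j = w j i" and "\<And>i. deg w i > 0"
  shows "selfadjoint_matrix (lap_matrix w r) (\<lambda>i. rpow (deg w i) r)"
proof
  show "rpow (deg w i) r > 0" for i
    using assms(2) by (rule rpow_pos)
  show "ipw (\<lambda>i. rpow (deg w i) r) (matvec (lap_matrix w r) u) v
      = ipw (\<lambda>i. rpow (deg w i) r) u (matvec (lap_matrix w r) v)" for u v
    using ipw_lap_matrix_dirichlet[OF assms, of r u v] ipw_lap_matrix_dirichlet[OF assms, of r v u]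
    by (simp add: ipw_commute[of _ u] mult_ac)
qed

lemma lap_matrix_psd:
  assumes "\<And>i j. w i j = w j i" and "\<And>i j. w i j \<ge> 0" and "\<And>i. deg w i > 0"
  shows "ipw (\<lambda>i. rpow (deg w i) r) (matvec (lap_matrix w r) u) u \<ge> 0"
proof -
  have "w i j * ((u i - u j) * (u i - u j)) \<ge> 0" for i j
    using assms(2) by simp
  then show ?thesis
    by (simp add: ipw_lap_matrix_dirichlet[OF assms(1,3)] mult.assoc sum_nonneg)
qed

lemma lap_matrix_const: "matvec (lap_matrix w r) (\<lambda>_. 1) = (\<lambda>_. 0)"
  by (intro ext) (simp add: lap_eq_matvec[symmetric] lap_def)

theorem theorem33:
  fixes w :: "'v::finite \<Rightarrow> 'v \<Rightarrow> real" and r eps t :: real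
    and u beta :: "nat \<Rightarrow> 'v \<Rightarrow> real"
  assumes graph: "weighted_graph w" and degpos: "\<forall>i. deg w i > 0"
    and r: "0 \<le> r" "r \<le> 1"
    and eps: "eps > 0" and t: "0 \<le> t" "t \<le> eps"
  shows "(\<forall>v\<in>V01. Hfun w r eps t v \<ge> 0) \<and>
    ((u 0 \<in> V01 \<and>
      (\<forall>n. beta (Suc n) \<in> Bset (u (Suc n)) \<and>
         (\<forall>i. u (Suc n) i - heat w r t (u n) i - (t / eps) * u (Suc n) i
                + (t / eps) * avg w r (u (Suc n))
              = (t / eps) * beta (Suc n) i - (t / eps) * avg w r (beta (Suc n)))))
     \<longrightarrow> (\<forall>n. Hfun w r eps t (u (Suc n)) \<le> Hfun w r eps t (u n)
              \<and> (Hfun w r eps t (u (Suc n)) = Hfun w r eps t (u n) \<longleftrightarrow> u (Suc n) = u n)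
              \<and> Hfun w r eps t (u n) - Hfun w r eps t (u (Suc n))
                  \<ge> (1 - t / eps) * (normV w r (\<lambda>i. u (Suc n) i - u n i))\<^sup>2))"
proof -
  have sym: "\<And>i j. w i j = w j i" and nonneg: "\<And>i j. w i j \<ge> 0"
    using graph by (auto simp: weighted_graph_def)
  interpret g: selfadjoint_matrix "lap_matrix w r" "\<lambda>i. rpow (deg w i) r"
    using selfadjoint_lap_matrix sym degpos by blast
  have Hfun_eq: "Hfun w r eps t = g.energy (t / eps) t"
    by (intro ext) (simp add: Hfun_def g.energy_def ipV_eq_ipw heat_eq_heat_semigroup)
  have avg_eq: "avg w r = g.mean"
    by (intro ext) (simp add: avg_def mass_def g.mean_def ipV_eq_ipw)
  have normV_sq: "(normV w r v)\<^sup>2 = ipw (\<lambda>i. rpow (deg w i) r) v v" for v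
    by (simp add: normV_def ipV_eq_ipw ipw_self_nonneg g.weight_pos less_imp_le)
  have lam: "0 \<le> t / eps" "t / eps \<le> 1"
    using eps t by auto
  note psd = lap_matrix_psd[OF sym nonneg] and const = lap_matrix_const
  show ?thesis
  proof (intro conjI ballI impI allI)
    show "Hfun w r eps t v \<ge> 0" if "v \<in> V01" for v
      unfolding Hfun_eq using g.energy_nonneg[OF psd] lam t(1) that degpos by blast
  next
    fix n
    assume scheme: "u 0 \<in> V01 \<and> (\<forall>n. beta (Suc n) \<in> Bset (u (Suc n)) \<and> (\<forall>i. u (Suc n) i - heat w r t (u n) i
      - t / eps * u (Suc n) i + t / eps * avg w r (u (Suc n))
      = t / eps * beta (Suc n) i - t / eps * avg w r (beta (Suc n))))"
    then have "u n \<in> V01"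
      by (cases n) (auto intro: Bset_imp_V01)
    with scheme g.energy_dissipation[OF const lam this, of "beta (Suc n)" "u (Suc n)" t]
    show "Hfun w r eps t (u (Suc n)) \<le> Hfun w r eps t (u n)"
      and "Hfun w r eps t (u (Suc n)) = Hfun w r eps t (u n) \<longleftrightarrow> u (Suc n) = u n"
      and "Hfun w r eps t (u n) - Hfun w r eps t (u (Suc n))
        \<ge> (1 - t / eps) * (normV w r (\<lambda>i. u (Suc n) i - u n i))\<^sup>2"
      by (simp_all add: Hfun_eq avg_eq normV_sq heat_eq_heat_semigroup)
  qed
qed

end
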